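(* Every ultrametric space $X$ (i.e.\ a metric space with $d(x,z)\le\max(d(x,y),d(y,z))$ for all $x,y,z$) satisfies $h_\infty(X)=0$.
   Context: Coarse entropy: for $\delta>0$, $P(n,\delta,x_0)$ is the set of $\delta$-paths $(x_0,\dots,x_n)$ (sequences with $d(x_i,x_{i+1})\le\delta$) starting at $x_0$, with distance $\max_i d(x_i,y_i)$; $s(n,R,\delta,x_0)$ is the supremum of cardinalities of $R$-separated subsets (distinct elements at distance $\ge R$) of $P(n,\delta,x_0)$; $h_\infty(X)=\lim_{\delta\to\infty}\lim_{R\to\infty}\limsup_{n\to\infty}\frac1n\log s(n,R,\delta,x_0)$, independent of $x_0$. *)

theory Defs
  imports "HOL-Analysis.Analysis" "HOL-Library.Extended_Nat"
begin

text \<open>delta-paths (x_0,...,x_n) starting at x0, represented as functions nat => 'a,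
  normalized to be constantly x0 beyond index n so that each path has a unique representative.\<close>
definition delta_paths :: "nat \<Rightarrow> real \<Rightarrow> 'a::metric_space \<Rightarrow> (nat \<Rightarrow> 'a) set" where
  "delta_paths n \<delta> x0 = {p. p 0 = x0 \<and> (\<forall>i<n. dist (p i) (p (Suc i)) \<le> \<delta>) \<and> (\<forall>i>n. p i = x0)}"

definition path_dist :: "nat \<Rightarrow> (nat \<Rightarrow> 'a::metric_space) \<Rightarrow> (nat \<Rightarrow> 'a) \<Rightarrow> real" where
  "path_dist n p q = Max ((\<lambda>i. dist (p i) (q i)) ` {..n})"

definition path_separated :: "nat \<Rightarrow> real \<Rightarrow> (nat \<Rightarrow> 'a::metric_space) set \<Rightarrow> bool" where
  "path_separated n R S = (\<forall>p\<in>S. \<forall>q\<in>S. p \<noteq> q \<longrightarrow> R \<le> path_dist n p q)"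

definition ecard :: "'b set \<Rightarrow> enat" where
  "ecard S = (if finite S then enat (card S) else \<infinity>)"

definition sep_num :: "nat \<Rightarrow> real \<Rightarrow> real \<Rightarrow> 'a::metric_space \<Rightarrow> enat" where
  "sep_num n R \<delta> x0 = (SUP S \<in> {S. S \<subseteq> delta_paths n \<delta> x0 \<and> path_separated n R S}. ecard S)"

definition elog :: "enat \<Rightarrow> ereal" where
  "elog x = (case x of enat k \<Rightarrow> (if k = 0 then -\<infinity> else ereal (ln (real k))) | \<infinity> \<Rightarrow> \<infinity>)"

definition coarse_entropy :: "'a::metric_space \<Rightarrow> ereal" where
  "coarse_entropy x0 =
     Lim at_top (\<lambda>\<delta>::real. Lim at_top (\<lambda>R::real.
        limsup (\<lambda>n. ereal (1 / real n) * elog (sep_num n R \<delta> x0))))"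

end

theory Submission
  imports Defs
begin

text \<open>In an ultrametric space every point of a \<open>\<delta>\<close>-path stays within \<open>\<delta>\<close> of its starting
  point, so any two \<open>\<delta>\<close>-paths from \<open>x0\<close> are \<open>\<delta>\<close>-close. Hence for \<open>R > \<delta>\<close> the \<open>R\<close>-separated
  sets of paths have at most one element, \<open>s(n,R,\<delta>,x0) = 1\<close>, and all growth rates vanish.\<close>

lemma delta_path_dist_start_le:
  fixes x0 :: "'a::metric_space"
  assumes ultra: "\<forall>x y z::'a. dist x z \<le> max (dist x y) (dist y z)"
    and "\<delta> \<ge> 0" and p: "p \<in> delta_paths n \<delta> x0"
  shows "dist x0 (p i) \<le> \<delta>"
proof (induction i)
  case 0
  then show ?case using assms by (simp add: delta_paths_def)
next
  case (Suc i)
  show ?case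
  proof (cases "i < n")
    case True
    then have "dist (p i) (p (Suc i)) \<le> \<delta>" using p by (simp add: delta_paths_def)
    moreover have "dist x0 (p (Suc i)) \<le> max (dist x0 (p i)) (dist (p i) (p (Suc i)))"
      using ultra by blast
    ultimately show ?thesis using Suc by linarith
  next
    case False
    then show ?thesis using assms by (simp add: delta_paths_def)
  qed
qed

lemma delta_paths_path_dist_le:
  fixes x0 :: "'a::metric_space"
  assumes ultra: "\<forall>x y z::'a. dist x z \<le> max (dist x y) (dist y z)"
    and "\<delta> \<ge> 0" and "p \<in> delta_paths n \<delta> x0" and "q \<in> delta_paths n \<delta> x0"
  shows "path_dist n p q \<le> \<delta>"
  unfolding path_dist_def
proof (subst Max_le_iff; clarsimp)
  fix i
  have "dist (p i) (q i) \<le> max (dist x0 (p i)) (dist x0 (q i))"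
    using ultra by (metis dist_commute)
  moreover have "dist x0 (p i) \<le> \<delta>" "dist x0 (q i) \<le> \<delta>"
    using delta_path_dist_start_le[OF ultra] assms by blast+
  ultimately show "dist (p i) (q i) \<le> \<delta>"
    by (meson max.boundedI order_trans)
qed

lemma const_path_in_delta_paths: "\<delta> \<ge> 0 \<Longrightarrow> (\<lambda>_. x0) \<in> delta_paths n \<delta> x0"
  by (simp add: delta_paths_def)

lemma sep_num_ge_1:
  assumes "\<delta> \<ge> 0"
  shows "1 \<le> sep_num n R \<delta> x0"
proof -
  have "{\<lambda>_. x0} \<in> {S. S \<subseteq> delta_paths n \<delta> x0 \<and> path_separated n R S}"
    using const_path_in_delta_paths[OF assms] by (simp add: path_separated_def)
  moreover have "ecard {\<lambda>_. x0} = 1"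
    by (simp add: ecard_def one_enat_def)
  ultimately show ?thesis
    unfolding sep_num_def by (metis SUP_upper)
qed

lemma sep_num_le_1:
  assumes close: "\<And>p q. p \<in> delta_paths n \<delta> x0 \<Longrightarrow> q \<in> delta_paths n \<delta> x0 \<Longrightarrow> path_dist n p q < R"
  shows "sep_num n R \<delta> x0 \<le> 1"
  unfolding sep_num_def
proof (rule SUP_least, clarsimp)
  fix S assume S: "S \<subseteq> delta_paths n \<delta> x0" "path_separated n R S"
  have "p = q" if "p \<in> S" "q \<in> S" for p q
    using that S close[of p q] by (force simp: path_separated_def)
  then have "S = {} \<or> (\<exists>p. S = {p})"
    by blast
  then show "ecard S \<le> 1"
    by (auto simp: ecard_def one_enat_def)
qed

lemma sep_num_ultrametric:
  fixes x0 :: "'a::metric_space"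
  assumes ultra: "\<forall>x y z::'a. dist x z \<le> max (dist x y) (dist y z)"
    and "\<delta> \<ge> 0" and "R > \<delta>"
  shows "sep_num n R \<delta> x0 = 1"
proof (rule antisym)
  show "sep_num n R \<delta> x0 \<le> 1"
    using delta_paths_path_dist_le[OF ultra] assms by (intro sep_num_le_1) fastforce
  show "1 \<le> sep_num n R \<delta> x0"
    using sep_num_ge_1 assms(2) .
qed

lemma Lim_at_top_eventually_const:
  fixes f :: "'a::linorder \<Rightarrow> 'b::t2_space"
  assumes "eventually (\<lambda>x. f x = c) at_top"
  shows "Lim at_top f = c"
  using assms by (intro tendsto_Lim trivial_limit_at_top_linorder tendsto_eventually)

theorem mainTheorem9:
  fixes x0 :: "'a::metric_space"
  assumes ultra: "\<forall>x y z::'a. dist x z \<le> max (dist x y) (dist y z)"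
  shows "coarse_entropy x0 = 0"
proof -
  have vanish: "limsup (\<lambda>n. ereal (1 / real n) * elog (sep_num n R \<delta> x0)) = 0"
    if "0 \<le> \<delta>" "\<delta> < R" for \<delta> R :: real
    using sep_num_ultrametric[OF ultra that] by (simp add: elog_def one_enat_def Limsup_const)
  have inner: "Lim at_top (\<lambda>R::real. limsup (\<lambda>n. ereal (1 / real n) * elog (sep_num n R \<delta> x0))) = 0"
    if "0 \<le> \<delta>" for \<delta> :: real
    by (intro Lim_at_top_eventually_const eventually_mono[OF eventually_gt_at_top] vanish that)
  show ?thesis
    unfolding coarse_entropy_def
    by (intro Lim_at_top_eventually_const eventually_mono[OF eventually_ge_at_top] inner)
qed

end
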